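(* Let $1\le k\le n$ and $S\in\{n\ k\}$. The restriction of $\mathsf{Rot}_S$ to the boundary $[0,\pi]^{Z_S}\setminus(0,\pi)^{Z_S}$ takes values in $\bigcup_{T<S}\mathsf{Gr}_k(n)_T$.
   Context: $\mathsf{Gr}_k(n)$ is the real Grassmannian of $k$-dimensional subspaces of $\mathbb{R}^n$, with the quotient topology from the map $\mathsf{col}$ sending an injective $n\times k$ matrix to its column space. $\{n\ k\}$ is the set of $k$-element subsets $S=\{s_1<\cdots<s_k\}$ of $\{1,\dots,n\}$, partially ordered by $S\le T$ iff $s_i\le t_i$ for all $i$. For $S$, let $\mathbb{R}^S=\mathrm{span}\{e_i: i\in S\}$, and $U_S$ the set of $V\in\mathsf{Gr}_k(n)$ whose orthogonal projection to $\mathbb{R}^S$ is an isomorphism. The Schubert cell is $\mathsf{Gr}_k(n)_S:=\{V\mid S \text{ is the maximum of }\{T: V\in U_T\}\}$. Let $Z_S:=\{(i,j)\mid 1\le i\le k,\ i\le j\le s_i-1\}$, totally ordered by $(i,j)\le(i',j')$ iff $i<i'$, or $i=i'$ and $j\ge j'$. $\mathsf{R}_j(\theta)\in O(n)$ is the rotation by $\theta$ in the oriented $(e_j,e_{j+1})$-plane. $\mathsf{Rot}_S:[0,\pi]^{Z_S}\to\mathsf{Gr}_k(n)$ is $(\theta_{(i,j)})\mapsto \mathsf{col}\bigl((\prod_{(i,j)\in Z_S}\mathsf{R}_j(\theta_{(i,j)}))\,\mathbb{1}_{n\times k}\bigr)$, product from left to right in increasing order of $Z_S$, $\mathbb{1}_{n\times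 k}$ the first $k$ columns of the identity. *)

theory Defs
  imports Jordan_Normal_Form.Matrix
begin

(* Matrix/vector indices are 0-based; row/coordinate index r corresponds to the
   standard basis vector e_(r+1).  Subsets S of {1..n} are 1-based as in the paper. *)

definition col :: "real mat \<Rightarrow> real vec set" where
  "col A = {A *\<^sub>v x | x. x \<in> carrier_vec (dim_col A)}"

definition Gr :: "nat \<Rightarrow> nat \<Rightarrow> real vec set set" where
  "Gr k n = {col A | A. A \<in> carrier_mat n k \<and> inj_on (\<lambda>x. A *\<^sub>v x) (carrier_vec k)}"

definition subsets_nk :: "nat \<Rightarrow> nat \<Rightarrow> nat set set" where
  "subsets_nk n k = {S. S \<subseteq> {1..n} \<and> card S = k}"

(* i-th smallest element s_i of S (1-based i) *)
definition elt :: "nat set \<Rightarrow> nat \<Rightarrow> nat" where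
  "elt S i = sorted_list_of_set S ! (i - 1)"

definition gale_le :: "nat \<Rightarrow> nat set \<Rightarrow> nat set \<Rightarrow> bool" where
  "gale_le k S T \<longleftrightarrow> (\<forall>i\<in>{1..k}. elt S i \<le> elt T i)"

definition gale_less :: "nat \<Rightarrow> nat set \<Rightarrow> nat set \<Rightarrow> bool" where
  "gale_less k S T \<longleftrightarrow> gale_le k S T \<and> S \<noteq> T"

definition coord_space :: "nat \<Rightarrow> nat set \<Rightarrow> real vec set" where
  "coord_space n S = {v \<in> carrier_vec n. \<forall>r<n. Suc r \<notin> S \<longrightarrow> v $ r = 0}"

definition proj :: "nat \<Rightarrow> nat set \<Rightarrow> real vec \<Rightarrow> real vec" where
  "proj n S v = vec n (\<lambda>r. if Suc r \<in> S then v $ r else 0)"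

(* U_S: subspaces whose orthogonal projection to R^S is an isomorphism
   (the projection is linear, so isomorphism = bijection V \<rightarrow> R^S) *)
definition U :: "nat \<Rightarrow> nat \<Rightarrow> nat set \<Rightarrow> real vec set set" where
  "U k n S = {V \<in> Gr k n. bij_betw (proj n S) V (coord_space n S)}"

definition schubert_cell :: "nat \<Rightarrow> nat \<Rightarrow> nat set \<Rightarrow> real vec set set" where
  "schubert_cell k n S = {V \<in> Gr k n.
      S \<in> subsets_nk n k \<and> V \<in> U k n S \<and>
      (\<forall>T \<in> subsets_nk n k. V \<in> U k n T \<longrightarrow> gale_le k T S)}"

(* Z_S as a list, in increasing order of the total order
   (i,j) \<le> (i',j') iff i < i', or i = i' and j \<ge> j' *)
definition Z_list :: "nat \<Rightarrow> nat set \<Rightarrow> (nat \<times> nat) list" where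
  "Z_list k S = concat (map (\<lambda>i. map (\<lambda>j. (i, j)) (rev [i..<elt S i])) [1..<Suc k])"

definition Z :: "nat \<Rightarrow> nat set \<Rightarrow> (nat \<times> nat) set" where
  "Z k S = {(i, j). 1 \<le> i \<and> i \<le> k \<and> i \<le> j \<and> j \<le> elt S i - 1}"

(* rotation by \<theta> in the oriented (e_j, e_(j+1))-plane of R^n (j 1-based):
   e_j \<mapsto> cos \<theta> e_j + sin \<theta> e_(j+1),  e_(j+1) \<mapsto> - sin \<theta> e_j + cos \<theta> e_(j+1) *)
definition Rj :: "nat \<Rightarrow> nat \<Rightarrow> real \<Rightarrow> real mat" where
  "Rj n j \<theta> = mat n n (\<lambda>(a, b).
      if Suc a = j \<and> Suc b = j then cos \<theta>
      else if Suc a = j + 1 \<and> Suc b = j + 1 then cos \<theta>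
      else if Suc a = j + 1 \<and> Suc b = j then sin \<theta>
      else if Suc a = j \<and> Suc b = j + 1 then - sin \<theta>
      else if a = b then 1 else 0)"

definition id_nk :: "nat \<Rightarrow> nat \<Rightarrow> real mat" where
  "id_nk n k = mat n k (\<lambda>(a, b). if a = b then 1 else 0)"

(* Rot_S(\<theta>) = col((\<Prod>_{(i,j) \<in> Z_S, increasing, left to right} R_j(\<theta>_(i,j))) 1_{n x k}) *)
definition Rot :: "nat \<Rightarrow> nat \<Rightarrow> nat set \<Rightarrow> (nat \<times> nat \<Rightarrow> real) \<Rightarrow> real vec set" where
  "Rot n k S \<theta> = col (foldr (\<lambda>(i, j) M. Rj n j (\<theta> (i, j)) * M) (Z_list k S) (1\<^sub>m n) * id_nk n k)"

end

theory Submission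
  imports Defs "HOL-Library.Function_Algebras"
begin

text \<open>
  A k-dimensional subspace V lies in the Schubert cell indexed by its pivot set T, the set of
  positions at which some vector of V has its last nonzero coordinate: projection to R^T is an
  isomorphism on V, and if projection to R^T' is injective on V, then for every m at most as many
  pivots as elements of T' lie below m, which says T' <= T in the Gale order. Moreover t_i <= m
  as soon as i independent vectors of V lie in R^m.

  The c-th column of the matrix defining Rot_S(theta) is e_c moved by the rotations of Z_S, the
  rows i > c acting first: they fix e_c, row c carries it into R^(s_c) one plane at a time, and
  the rows i < c preserve R^(s_c). Hence the first i columns lie in R^(s_i), and the pivot set of
  Rot_S(theta) is <= S. If theta_(c,j) is 0 or pi, then R_j(theta_(c,j)) is plus or minus the
  identity on the plane it acts in, so column c gets stuck in R^(s_c - 1) and t_c < s_c.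
\<close>

section \<open>Pivots of subspaces of finitely supported sequences\<close>

definition scale_fun :: "real \<Rightarrow> (nat \<Rightarrow> real) \<Rightarrow> nat \<Rightarrow> real" where
  "scale_fun c f = (\<lambda>i. c * f i)"

interpretation rfun: vector_space scale_fun
  by unfold_locales (auto simp: scale_fun_def fun_eq_iff algebra_simps)

lemma sum_fun_apply: "(\<Sum>x\<in>A. (f x :: nat \<Rightarrow> real)) i = (\<Sum>x\<in>A. f x i)"
  by (induction A rule: infinite_finite_induct) auto

lemma rfun_module_homI:
  assumes "\<And>x y. h (x + y) = h x + h y" and "\<And>c x. h (scale_fun c x) = scale_fun c (h x)"
  shows "module_hom scale_fun scale_fun h"
  using assms by (simp add: module_hom_iff_linear Vector_Spaces.linear_iff rfun.vector_space_axioms)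

definition funs_below :: "nat \<Rightarrow> (nat \<Rightarrow> real) set" where
  "funs_below m = {f. \<forall>i\<ge>m. f i = 0}"

lemma subspace_funs_below: "rfun.subspace (funs_below m)"
  by (auto simp: rfun.subspace_def funs_below_def scale_fun_def)

lemma funs_below_mono: "m \<le> m' \<Longrightarrow> funs_below m \<subseteq> funs_below m'"
  by (auto simp: funs_below_def)

definition delta_fun :: "nat \<Rightarrow> nat \<Rightarrow> real" where
  "delta_fun r = (\<lambda>i. if i = r then 1 else 0)"

lemma in_span_delta_funs:
  assumes "f \<in> funs_below m" and "\<forall>i. i \<notin> X \<longrightarrow> f i = 0"
  shows "f \<in> rfun.span (delta_fun ` {r\<in>X. r < m})"
proof -
  have "f = (\<Sum>r\<in>{r\<in>X. r < m}. scale_fun (f r) (delta_fun r))"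
  proof
    fix i
    have "(\<Sum>r\<in>{r\<in>X. r < m}. scale_fun (f r) (delta_fun r)) i = (\<Sum>r\<in>{r\<in>X. r < m}. if i = r then f r else 0)"
      unfolding sum_fun_apply scale_fun_def delta_fun_def by (rule sum.cong) auto
    also have "\<dots> = f i"
      using assms by (auto simp: funs_below_def not_less)
    finally show "f i = (\<Sum>r\<in>{r\<in>X. r < m}. scale_fun (f r) (delta_fun r)) i" by simp
  qed
  also have "\<dots> \<in> rfun.span (delta_fun ` {r\<in>X. r < m})"
    by (intro rfun.span_sum rfun.span_scale rfun.span_base) auto
  finally show ?thesis .
qed

lemma funs_below_eq_span: "funs_below m = rfun.span (delta_fun ` {..<m})"
proof
  show "funs_below m \<subseteq> rfun.span (delta_fun ` {..<m})"
    using in_span_delta_funs[where X = UNIV] by (auto simp: lessThan_def)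
  show "rfun.span (delta_fun ` {..<m}) \<subseteq> funs_below m"
    by (rule rfun.span_minimal[OF _ subspace_funs_below]) (auto simp: funs_below_def delta_fun_def)
qed

lemma independent_delta_funs: "rfun.independent (delta_fun ` {..<m})"
proof (induction m)
  case 0 then show ?case by (simp add: rfun.independent_empty)
next
  case (Suc m)
  have "delta_fun m \<notin> funs_below m" by (simp add: funs_below_def delta_fun_def)
  then have "delta_fun m \<notin> rfun.span (delta_fun ` {..<m})" by (simp add: funs_below_eq_span)
  then show ?case unfolding lessThan_Suc image_insert using Suc by (rule rfun.independent_insertI)
qed

lemma inj_delta_fun: "inj delta_fun"
  by (rule injI) (metis delta_fun_def one_neq_zero)

definition pivot_set :: "(nat \<Rightarrow> real) set \<Rightarrow> nat set" where
  "pivot_set W = {r. \<exists>f\<in>W. f r \<noteq> 0 \<and> (\<forall>i>r. f i = 0)}"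

definition pivot_fun :: "(nat \<Rightarrow> real) set \<Rightarrow> nat \<Rightarrow> nat \<Rightarrow> real" where
  "pivot_fun W r = (SOME f. f \<in> W \<and> f r \<noteq> 0 \<and> (\<forall>i>r. f i = 0))"

lemma pivot_fun:
  assumes "r \<in> pivot_set W"
  shows "pivot_fun W r \<in> W" "pivot_fun W r r \<noteq> 0" "\<forall>i>r. pivot_fun W r i = 0"
proof -
  have "\<exists>f. f \<in> W \<and> f r \<noteq> 0 \<and> (\<forall>i>r. f i = 0)" using assms by (auto simp: pivot_set_def)
  then have "pivot_fun W r \<in> W \<and> pivot_fun W r r \<noteq> 0 \<and> (\<forall>i>r. pivot_fun W r i = 0)"
    unfolding pivot_fun_def by (rule someI_ex)
  then show "pivot_fun W r \<in> W" "pivot_fun W r r \<noteq> 0" "\<forall>i>r. pivot_fun W r i = 0"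
    by auto
qed

lemma pivot_fun_in_funs_below: "r \<in> pivot_set W \<Longrightarrow> r < m \<Longrightarrow> pivot_fun W r \<in> funs_below m"
  using pivot_fun(3) by (auto simp: funs_below_def)

lemma pivot_set_subset: "W \<subseteq> funs_below n \<Longrightarrow> pivot_set W \<subseteq> {..<n}"
  unfolding pivot_set_def funs_below_def by (force simp: not_less[symmetric])

lemma nonzero_has_pivot:
  assumes "f \<in> W" "f \<in> funs_below n" "f \<noteq> 0"
  shows "\<exists>r\<in>pivot_set W. f r \<noteq> 0"
proof -
  let ?A = "{i. f i \<noteq> 0}"
  have "?A \<subseteq> {..<n}" using assms(2) by (auto simp: funs_below_def not_less[symmetric])
  then have fin: "finite ?A" by (rule finite_subset) simp
  have "?A \<noteq> {}" using assms(3) by auto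
  then have "Max ?A \<in> ?A" using fin by (rule Max_in[rotated])
  moreover have "\<forall>i>Max ?A. f i = 0" using Max_ge[OF fin] by (auto simp: not_le[symmetric])
  ultimately show ?thesis using assms(1) unfolding pivot_set_def by blast
qed

lemma in_span_pivot_funs:
  assumes W: "rfun.subspace W"
  shows "f \<in> W \<Longrightarrow> f \<in> funs_below m \<Longrightarrow> f \<in> rfun.span (pivot_fun W ` {r\<in>pivot_set W. r < m})"
proof (induction m arbitrary: f)
  case 0
  then have "f = 0" by (intro ext) (auto simp: funs_below_def)
  then show ?case using rfun.span_zero by blast
next
  case (Suc m)
  let ?P = "\<lambda>m. rfun.span (pivot_fun W ` {r\<in>pivot_set W. r < m})"
  have mono: "?P m \<subseteq> ?P (Suc m)" by (rule rfun.span_mono) auto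
  show ?case
  proof (cases "f m = 0")
    case True
    then have "f \<in> funs_below m"
      using Suc.prems by (auto simp: funs_below_def) (metis Suc_leI le_neq_implies_less)
    then show ?thesis using Suc mono by blast
  next
    case False
    then have m: "m \<in> pivot_set W" using Suc.prems by (auto simp: pivot_set_def funs_below_def)
    define w where "w = pivot_fun W m"
    have w: "w \<in> W" "w m \<noteq> 0" "w \<in> funs_below (Suc m)"
      using pivot_fun[OF m] pivot_fun_in_funs_below[OF m] by (auto simp: w_def)
    define g where "g = f - scale_fun (f m / w m) w"
    have "g \<in> W" unfolding g_def using W Suc.prems w(1)
      by (intro rfun.subspace_diff rfun.subspace_scale) auto
    moreover have "g \<in> funs_below m"
      unfolding funs_below_def
    proof (intro CollectI allI impI)
      fix i assume "m \<le> i"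
      then show "g i = 0"
        using Suc.prems(2) w(2,3) by (cases "i = m") (auto simp: g_def scale_fun_def funs_below_def)
    qed
    ultimately have "g \<in> ?P (Suc m)" using Suc.IH mono by blast
    moreover have "w \<in> ?P (Suc m)" using m by (auto simp: w_def intro: rfun.span_base)
    ultimately have "g + scale_fun (f m / w m) w \<in> ?P (Suc m)"
      by (intro rfun.span_add rfun.span_scale)
    then show ?thesis by (simp add: g_def)
  qed
qed

lemma inj_on_pivot_fun: "inj_on (pivot_fun W) (pivot_set W)"
proof (rule inj_onI)
  fix r r' assume r: "r \<in> pivot_set W" "r' \<in> pivot_set W" "pivot_fun W r = pivot_fun W r'"
  show "r = r'"
    using pivot_fun(2,3)[OF r(1)] pivot_fun(2,3)[OF r(2)] r(3) by (metis linorder_neqE_nat)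
qed

lemma independent_pivot_funs: "rfun.independent (pivot_fun W ` {r\<in>pivot_set W. r < m})"
proof (induction m)
  case 0 then show ?case by (simp add: rfun.independent_empty)
next
  case (Suc m)
  show ?case
  proof (cases "m \<in> pivot_set W")
    case False
    then have "{r\<in>pivot_set W. r < Suc m} = {r\<in>pivot_set W. r < m}" by (auto simp: less_Suc_eq)
    then show ?thesis using Suc by simp
  next
    case True
    have "rfun.span (pivot_fun W ` {r\<in>pivot_set W. r < m}) \<subseteq> funs_below m"
      by (rule rfun.span_minimal[OF _ subspace_funs_below]) (auto intro: pivot_fun_in_funs_below)
    moreover have "pivot_fun W m \<notin> funs_below m" using pivot_fun(2)[OF True] by (auto simp: funs_below_def)
    ultimately have "pivot_fun W m \<notin> rfun.span (pivot_fun W ` {r\<in>pivot_set W. r < m})" by blast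
    moreover have "{r\<in>pivot_set W. r < Suc m} = insert m {r\<in>pivot_set W. r < m}"
      using True by (auto simp: less_Suc_eq)
    ultimately show ?thesis using Suc by (simp add: rfun.independent_insertI)
  qed
qed

lemma card_independent_le_pivots:
  assumes "rfun.subspace W" "rfun.independent I" "I \<subseteq> W" "I \<subseteq> funs_below m"
  shows "card I \<le> card {r\<in>pivot_set W. r < m}"
proof -
  have "I \<subseteq> rfun.span (pivot_fun W ` {r\<in>pivot_set W. r < m})"
    using in_span_pivot_funs[OF assms(1)] assms(3,4) by blast
  then have "card I \<le> card (pivot_fun W ` {r\<in>pivot_set W. r < m})"
    using rfun.independent_span_bound[OF _ assms(2)] by auto
  also have "\<dots> \<le> card {r\<in>pivot_set W. r < m}" by (rule card_image_le) simp
  finally show ?thesis .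
qed

lemma card_pivot_set:
  assumes "rfun.independent B" "finite B" "rfun.span B \<subseteq> funs_below n"
  shows "card (pivot_set (rfun.span B)) = card B"
proof -
  let ?W = "rfun.span B"
  have piv: "{r\<in>pivot_set ?W. r < n} = pivot_set ?W" using pivot_set_subset[OF assms(3)] by auto
  have B: "B \<subseteq> funs_below n" using assms(3) rfun.span_superset by blast
  have "card B \<le> card (pivot_set ?W)"
    using card_independent_le_pivots[OF rfun.subspace_span assms(1) rfun.span_superset B] piv by simp
  moreover have "pivot_fun ?W ` pivot_set ?W \<subseteq> ?W" using pivot_fun(1) by blast
  then have "card (pivot_fun ?W ` pivot_set ?W) \<le> card B"
    using rfun.independent_span_bound[OF assms(2) independent_pivot_funs[of ?W n]] by (simp add: piv)
  then have "card (pivot_set ?W) \<le> card B" by (simp add: card_image[OF inj_on_pivot_fun])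
  ultimately show ?thesis by simp
qed

definition restrict_fun :: "nat set \<Rightarrow> (nat \<Rightarrow> real) \<Rightarrow> nat \<Rightarrow> real" where
  "restrict_fun X f = (\<lambda>i. if i \<in> X then f i else 0)"

lemma module_hom_restrict_fun: "module_hom scale_fun scale_fun (restrict_fun X)"
  by (rule rfun_module_homI) (auto simp: restrict_fun_def scale_fun_def fun_eq_iff)

lemma inj_on_restrict_pivot_set:
  assumes W: "rfun.subspace W" "W \<subseteq> funs_below n"
  shows "inj_on (restrict_fun (pivot_set W)) W"
proof (rule inj_onI)
  fix f g assume fg: "f \<in> W" "g \<in> W" "restrict_fun (pivot_set W) f = restrict_fun (pivot_set W) g"
  have "f - g \<in> W" using fg W rfun.subspace_diff by blast
  moreover have "(f - g) r = 0" if "r \<in> pivot_set W" for r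
    using fun_cong[OF fg(3), of r] that by (simp add: restrict_fun_def)
  ultimately have "f - g = 0" using nonzero_has_pivot W(2) by blast
  then show "f = g" by simp
qed

lemma restrict_pivot_set_onto:
  assumes W: "rfun.subspace W"
  shows "u \<in> funs_below m \<Longrightarrow> \<forall>i. i \<notin> pivot_set W \<longrightarrow> u i = 0 \<Longrightarrow> u \<in> restrict_fun (pivot_set W) ` W"
proof (induction m arbitrary: u)
  case 0
  then have "u = restrict_fun (pivot_set W) 0" by (auto simp: funs_below_def restrict_fun_def)
  then show ?case using rfun.subspace_0[OF W] by blast
next
  case (Suc m)
  show ?case
  proof (cases "u m = 0")
    case True
    then have "u \<in> funs_below m"
      using Suc.prems by (auto simp: funs_below_def) (metis Suc_leI le_neq_implies_less)
    then show ?thesis using Suc by blast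
  next
    case False
    then have m: "m \<in> pivot_set W" using Suc.prems by auto
    define w where "w = pivot_fun W m"
    have w: "w \<in> W" "w m \<noteq> 0" "w \<in> funs_below (Suc m)"
      using pivot_fun[OF m] pivot_fun_in_funs_below[OF m] by (auto simp: w_def)
    define c where "c = u m / w m"
    have "u - scale_fun c (restrict_fun (pivot_set W) w) \<in> funs_below m"
      unfolding funs_below_def
    proof (intro CollectI allI impI)
      fix i assume "m \<le> i"
      then show "(u - scale_fun c (restrict_fun (pivot_set W) w)) i = 0"
        using Suc.prems(1) w(2,3) m
        by (cases "i = m") (auto simp: c_def scale_fun_def restrict_fun_def funs_below_def)
    qed
    moreover have "\<forall>i. i \<notin> pivot_set W \<longrightarrow> (u - scale_fun c (restrict_fun (pivot_set W) w)) i = 0"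
      using Suc.prems(2) by (simp add: restrict_fun_def scale_fun_def)
    ultimately obtain f where f: "f \<in> W" "u - scale_fun c (restrict_fun (pivot_set W) w) = restrict_fun (pivot_set W) f"
      using Suc.IH by blast
    have "restrict_fun (pivot_set W) (f + scale_fun c w) = u"
      using f(2) Suc.prems(2) by (simp add: fun_eq_iff restrict_fun_def scale_fun_def) (metis add.commute diff_eq_eq)
    moreover have "f + scale_fun c w \<in> W" using W f(1) w(1) by (intro rfun.subspace_add rfun.subspace_scale)
    ultimately show ?thesis by blast
  qed
qed

lemma card_pivots_below_le:
  assumes W: "rfun.subspace W" and inj: "inj_on (restrict_fun X) W"
  shows "card {r\<in>pivot_set W. r < m} \<le> card {r\<in>X. r < m}"
proof -
  let ?I = "pivot_fun W ` {r\<in>pivot_set W. r < m}"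
  have IW: "?I \<subseteq> W" using pivot_fun(1) by blast
  have "rfun.independent (restrict_fun X ` ?I)"
    using module_hom.independent_injective_image[OF module_hom_restrict_fun independent_pivot_funs]
      inj_on_subset[OF inj rfun.span_minimal[OF IW W]] by blast
  moreover have "restrict_fun X ` ?I \<subseteq> rfun.span (delta_fun ` {r\<in>X. r < m})"
    using pivot_fun_in_funs_below by (force intro!: in_span_delta_funs simp: funs_below_def restrict_fun_def)
  ultimately have "card (restrict_fun X ` ?I) \<le> card (delta_fun ` {r\<in>X. r < m})"
    using rfun.independent_span_bound by auto
  also have "\<dots> \<le> card {r\<in>X. r < m}" by (rule card_image_le) auto
  finally show ?thesis
    using inj_on_subset[OF inj IW] inj_on_subset[OF inj_on_pivot_fun]
    by (simp add: card_image)
qed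

section \<open>The Gale order through counting\<close>

lemma elt_mem:
  assumes "finite S" "1 \<le> i" "i \<le> card S"
  shows "elt S i \<in> S"
  using assms nth_mem[of "i - 1" "sorted_list_of_set S"] by (simp add: elt_def)

lemma elt_strict_mono:
  assumes "finite S" "1 \<le> i" "i < i'" "i' \<le> card S"
  shows "elt S i < elt S i'"
  using assms sorted_wrt_nth_less[OF strict_sorted_list_of_set, of "i - 1" "i' - 1" S]
  by (simp add: elt_def)

lemma elt_mono:
  assumes "finite S" "1 \<le> i" "i \<le> i'" "i' \<le> card S"
  shows "elt S i \<le> elt S i'"
  using elt_strict_mono[OF assms(1,2) _ assms(4)] assms(3) by (cases "i = i'") auto

lemma elt_ge_index:
  assumes "finite S" "0 \<notin> S"
  shows "1 \<le> i \<Longrightarrow> i \<le> card S \<Longrightarrow> i \<le> elt S i"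
proof (induction i)
  case (Suc i)
  show ?case
  proof (cases "i = 0")
    case True
    then have "elt S (Suc i) \<noteq> 0" using elt_mem[OF assms(1) Suc.prems] assms(2) by metis
    then show ?thesis using True by simp
  next
    case False
    then show ?thesis using Suc elt_strict_mono[OF assms(1), of i "Suc i"] by simp
  qed
qed simp

lemma elt_le_iff_card_le:
  assumes X: "finite X" and i: "1 \<le> i" "i \<le> card X"
  shows "elt X i \<le> m \<longleftrightarrow> i \<le> card {x\<in>X. x \<le> m}"
proof -
  define L where "L = sorted_list_of_set X"
  have L: "sorted_wrt (<) L" "set L = X" "length L = card X" "distinct L"
    using X by (simp_all add: L_def strict_sorted_list_of_set)
  have nth_le: "L ! p \<le> L ! q \<longleftrightarrow> p \<le> q" if "p < length L" "q < length L" for p q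
    using that sorted_wrt_nth_less[OF L(1)] by (metis leD leI le_eq_less_or_eq)
  have eltL: "elt X i = L ! (i - 1)" by (simp add: elt_def L_def)
  have below: "{x\<in>X. x \<le> elt X i} = set (take i L)"
  proof -
    have "{x\<in>X. x \<le> elt X i} = {L ! p | p. p < length L \<and> L ! p \<le> L ! (i - 1)}"
      unfolding eltL by (auto simp flip: L(2) simp: in_set_conv_nth)
    also have "\<dots> = {L ! p | p. p < i}" using i L(3) nth_le by force
    also have "\<dots> = set (take i L)" using i L(3) by (simp add: set_conv_nth) (metis nth_take)
    finally show ?thesis .
  qed
  have card_below: "card {x\<in>X. x \<le> elt X i} = i"
    using i L by (simp add: below distinct_card)
  have fin: "finite {x\<in>X. x \<le> m}" using X by simp
  show ?thesis
  proof
    assume "elt X i \<le> m"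
    then have "{x\<in>X. x \<le> elt X i} \<subseteq> {x\<in>X. x \<le> m}" by auto
    from card_mono[OF fin this] show "i \<le> card {x\<in>X. x \<le> m}" using card_below by simp
  next
    assume c: "i \<le> card {x\<in>X. x \<le> m}"
    show "elt X i \<le> m"
    proof (rule ccontr)
      assume "\<not> elt X i \<le> m"
      then have "{x\<in>X. x \<le> m} \<subseteq> {x\<in>X. x \<le> elt X i} - {elt X i}" by auto
      then have "card {x\<in>X. x \<le> m} \<le> i - 1"
        using card_mono[of "{x\<in>X. x \<le> elt X i} - {elt X i}"] X card_below elt_mem[OF X i]
        by (simp add: card_Diff_singleton)
      then show False using c i by simp
    qed
  qed
qed

lemma gale_le_if_card_le:
  assumes "finite T" "finite T'" "card T = k" "card T' = k"
    and "\<And>m. card {x\<in>T. x \<le> m} \<le> card {x\<in>T'. x \<le> m}"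
  shows "gale_le k T' T"
  unfolding gale_le_def
proof
  fix i assume i: "i \<in> {1..k}"
  have "i \<le> card {x\<in>T. x \<le> elt T i}"
    using elt_le_iff_card_le[OF assms(1), of i "elt T i"] i assms(3) by simp
  also have "\<dots> \<le> card {x\<in>T'. x \<le> elt T i}" by (rule assms(5))
  finally show "elt T' i \<le> elt T i" using elt_le_iff_card_le[OF assms(2)] i assms(4) by simp
qed

lemma card_Suc_image_le_eq: "card {x \<in> Suc ` X. x \<le> m} = card {r\<in>X. r < m}"
proof -
  have "{x \<in> Suc ` X. x \<le> m} = Suc ` {r\<in>X. r < m}" by auto
  then show ?thesis by (simp add: card_image)
qed

lemma subsets_nk_finite: "S \<in> subsets_nk n k \<Longrightarrow> finite S"
  using finite_subset by (auto simp: subsets_nk_def)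

lemma subsets_nk_elt:
  assumes "S \<in> subsets_nk n k" "1 \<le> i" "i \<le> k"
  shows "i \<le> elt S i" "elt S i \<le> n"
proof -
  have S: "finite S" "S \<subseteq> {1..n}" "card S = k"
    using assms(1) subsets_nk_finite[OF assms(1)] by (auto simp: subsets_nk_def)
  have "0 \<notin> S" using S(2) by auto
  then show "i \<le> elt S i" using elt_ge_index[OF S(1)] S(3) assms(2,3) by auto
  show "elt S i \<le> n" using elt_mem[OF S(1) assms(2)] S assms(3) by auto
qed

section \<open>Pivots of column spaces and Schubert cells\<close>

definition fun_of_vec :: "nat \<Rightarrow> real vec \<Rightarrow> nat \<Rightarrow> real" where
  "fun_of_vec n v = (\<lambda>i. if i < n then v $ i else 0)"

lemma inj_on_fun_of_vec: "inj_on (fun_of_vec n) (carrier_vec n)"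
proof (rule inj_onI)
  fix v w assume vw: "v \<in> carrier_vec n" "w \<in> carrier_vec n" "fun_of_vec n v = fun_of_vec n w"
  show "v = w"
  proof (rule eq_vecI)
    fix i assume "i < dim_vec w"
    then show "v $ i = w $ i" using fun_cong[OF vw(3), of i] vw(2) by (simp add: fun_of_vec_def)
  qed (use vw in simp)
qed

lemma fun_of_vec_in_funs_below: "fun_of_vec n v \<in> funs_below n"
  by (simp add: fun_of_vec_def funs_below_def)

lemma fun_of_vec_proj: "fun_of_vec n (proj n T v) = restrict_fun {r. Suc r \<in> T} (fun_of_vec n v)"
  by (auto simp: fun_of_vec_def proj_def restrict_fun_def)

definition vecs_below :: "nat \<Rightarrow> nat \<Rightarrow> real vec set" where
  "vecs_below n m = {v \<in> carrier_vec n. \<forall>r. m \<le> r \<longrightarrow> r < n \<longrightarrow> v $ r = 0}"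

lemma vecs_below_mono: "m \<le> m' \<Longrightarrow> vecs_below n m \<subseteq> vecs_below n m'"
  by (auto simp: vecs_below_def)

lemma fun_of_vec_vecs_below: "v \<in> vecs_below n m \<Longrightarrow> fun_of_vec n v \<in> funs_below m"
  by (auto simp: fun_of_vec_def funs_below_def vecs_below_def)

text \<open>Coordinates are 0-based, subsets in {n k} are 1-based, hence the shift by Suc.\<close>

definition pivots :: "nat \<Rightarrow> real vec set \<Rightarrow> nat set" where
  "pivots n V = Suc ` pivot_set (fun_of_vec n ` V)"

definition mat_fun :: "real mat \<Rightarrow> (nat \<Rightarrow> real) \<Rightarrow> nat \<Rightarrow> real" where
  "mat_fun A g = fun_of_vec (dim_row A) (A *\<^sub>v vec (dim_col A) g)"

lemma module_hom_mat_fun: "module_hom scale_fun scale_fun (mat_fun A)"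
proof (rule rfun_module_homI)
  have A: "A \<in> carrier_mat (dim_row A) (dim_col A)" by simp
  fix x y :: "nat \<Rightarrow> real" and c :: real
  have "vec (dim_col A) (x + y) = vec (dim_col A) x + vec (dim_col A) y" by auto
  then show "mat_fun A (x + y) = mat_fun A x + mat_fun A y"
    using mult_add_distrib_mat_vec[OF A, of "vec (dim_col A) x" "vec (dim_col A) y"]
    by (auto simp: mat_fun_def fun_of_vec_def)
  have "vec (dim_col A) (scale_fun c x) = c \<cdot>\<^sub>v vec (dim_col A) x" by (auto simp: scale_fun_def)
  then show "mat_fun A (scale_fun c x) = scale_fun c (mat_fun A x)"
    using mult_mat_vec[OF A, of "vec (dim_col A) x" c]
    by (auto simp: mat_fun_def fun_of_vec_def scale_fun_def)
qed

lemma mat_fun_delta_fun: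
  assumes "c < dim_col A"
  shows "mat_fun A (delta_fun c) = fun_of_vec (dim_row A) (Matrix.col A c)"
proof -
  have "vec (dim_col A) (delta_fun c) = unit_vec (dim_col A) c" by (auto simp: delta_fun_def unit_vec_def)
  moreover have "A *\<^sub>v unit_vec (dim_col A) c = Matrix.col A c"
    by (rule eq_vecI) (simp_all add: assms)
  ultimately show ?thesis by (simp add: mat_fun_def)
qed

lemma fun_of_vec_col:
  assumes "A \<in> carrier_mat n k"
  shows "fun_of_vec n ` col A = mat_fun A ` funs_below k"
proof (intro equalityI subsetI)
  fix f assume "f \<in> fun_of_vec n ` col A"
  then obtain x where x: "x \<in> carrier_vec k" "f = fun_of_vec n (A *\<^sub>v x)"
    using assms by (auto simp: col_def)
  then have "vec k (fun_of_vec k x) = x" by (auto simp: fun_of_vec_def)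
  then have "f = mat_fun A (fun_of_vec k x)" using x assms by (simp add: mat_fun_def)
  then show "f \<in> mat_fun A ` funs_below k" using fun_of_vec_in_funs_below by blast
next
  fix f assume "f \<in> mat_fun A ` funs_below k"
  then obtain g where "f = fun_of_vec n (A *\<^sub>v vec k g)" using assms by (auto simp: mat_fun_def)
  moreover have "A *\<^sub>v vec k g \<in> col A"
    unfolding col_def using assms by (intro CollectI exI[of _ "vec k g"]) auto
  ultimately show "f \<in> fun_of_vec n ` col A" by blast
qed

lemma fun_of_vec_col_eq_span:
  assumes "A \<in> carrier_mat n k"
  shows "fun_of_vec n ` col A = rfun.span (mat_fun A ` delta_fun ` {..<k})"
  using module_hom.span_image[OF module_hom_mat_fun] by (simp add: fun_of_vec_col[OF assms] funs_below_eq_span)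

lemma inj_on_mat_fun:
  assumes A: "A \<in> carrier_mat n k" and inj: "inj_on ((*\<^sub>v) A) (carrier_vec k)"
  shows "inj_on (mat_fun A) (funs_below k)"
proof (rule inj_onI)
  fix f g assume fg: "f \<in> funs_below k" "g \<in> funs_below k" "mat_fun A f = mat_fun A g"
  then have "A *\<^sub>v vec k f = A *\<^sub>v vec k g"
    using A by (intro inj_onD[OF inj_on_fun_of_vec]) (auto simp: mat_fun_def)
  then have "vec k f = vec k g" by (rule inj_onD[OF inj]) auto
  show "f = g"
  proof
    fix i show "f i = g i"
      using fg(1,2) fun_cong[OF \<open>vec k f = vec k g\<close>[THEN arg_cong[of _ _ "vec_index"]], of i]
      by (cases "i < k") (auto simp: funs_below_def)
  qed
qed

lemma independent_mat_fun_deltas: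
  assumes A: "A \<in> carrier_mat n k" "inj_on ((*\<^sub>v) A) (carrier_vec k)" and "m \<le> k"
  shows "rfun.independent (mat_fun A ` delta_fun ` {..<m})" "card (mat_fun A ` delta_fun ` {..<m}) = m"
proof -
  have "rfun.span (delta_fun ` {..<m}) \<subseteq> funs_below k"
    using funs_below_eq_span funs_below_mono[OF assms(3)] by blast
  then have inj: "inj_on (mat_fun A) (rfun.span (delta_fun ` {..<m}))"
    using inj_on_subset[OF inj_on_mat_fun[OF A]] by blast
  then show "rfun.independent (mat_fun A ` delta_fun ` {..<m})"
    using module_hom.independent_injective_image[OF module_hom_mat_fun independent_delta_funs] by blast
  have "inj_on (mat_fun A) (delta_fun ` {..<m})" using inj_on_subset[OF inj rfun.span_superset] .
  then show "card (mat_fun A ` delta_fun ` {..<m}) = m"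
    by (simp add: card_image inj_on_subset[OF inj_delta_fun])
qed

lemma pivots_col_in_subsets_nk:
  assumes "A \<in> carrier_mat n k" "inj_on ((*\<^sub>v) A) (carrier_vec k)"
  shows "pivots n (col A) \<in> subsets_nk n k"
proof -
  let ?B = "mat_fun A ` delta_fun ` {..<k}"
  have W: "fun_of_vec n ` col A = rfun.span ?B" by (rule fun_of_vec_col_eq_span[OF assms(1)])
  have sub: "rfun.span ?B \<subseteq> funs_below n" unfolding W[symmetric] using fun_of_vec_in_funs_below by blast
  have "card (pivot_set (rfun.span ?B)) = k"
    using card_pivot_set[OF independent_mat_fun_deltas(1)[OF assms order_refl] _ sub]
      independent_mat_fun_deltas(2)[OF assms order_refl] by simp
  moreover have "pivot_set (rfun.span ?B) \<subseteq> {..<n}" by (rule pivot_set_subset[OF sub])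
  ultimately show ?thesis unfolding pivots_def subsets_nk_def W by (auto simp: card_image)
qed

lemma elt_pivots_col_le:
  assumes A: "A \<in> carrier_mat n k" "inj_on ((*\<^sub>v) A) (carrier_vec k)" and i: "1 \<le> i" "i \<le> k"
    and below: "\<forall>c<i. Matrix.col A c \<in> vecs_below n m"
  shows "elt (pivots n (col A)) i \<le> m"
proof -
  let ?I = "mat_fun A ` delta_fun ` {..<i}"
  let ?W = "fun_of_vec n ` col A"
  have "?I \<subseteq> mat_fun A ` delta_fun ` {..<k}" using i by auto
  also have "\<dots> \<subseteq> ?W" unfolding fun_of_vec_col_eq_span[OF A(1)] by (rule rfun.span_superset)
  finally have IW: "?I \<subseteq> ?W" .
  have "mat_fun A (delta_fun c) \<in> funs_below m" if "c < i" for c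
    using below that i A(1) mat_fun_delta_fun[of c A] fun_of_vec_vecs_below by simp
  then have Im: "?I \<subseteq> funs_below m" by blast
  have "rfun.subspace ?W" unfolding fun_of_vec_col_eq_span[OF A(1)] by (rule rfun.subspace_span)
  from card_independent_le_pivots[OF this independent_mat_fun_deltas(1)[OF A i(2)] IW Im]
  have "i \<le> card {r\<in>pivot_set ?W. r < m}" using independent_mat_fun_deltas(2)[OF A i(2)] by simp
  then have "i \<le> card {x\<in>pivots n (col A). x \<le> m}" by (simp add: pivots_def card_Suc_image_le_eq)
  moreover have "finite (pivots n (col A))" "card (pivots n (col A)) = k"
    using pivots_col_in_subsets_nk[OF A] subsets_nk_finite[OF pivots_col_in_subsets_nk[OF A]]
    by (auto simp: subsets_nk_def)
  ultimately show ?thesis using elt_le_iff_card_le i by simp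
qed

lemma inj_on_proj_iff:
  assumes "V \<subseteq> carrier_vec n"
  shows "inj_on (proj n T) V \<longleftrightarrow> inj_on (restrict_fun {r. Suc r \<in> T}) (fun_of_vec n ` V)"
proof -
  have "inj_on (fun_of_vec n) (proj n T ` V)"
    using inj_on_fun_of_vec by (rule inj_on_subset) (auto simp: proj_def)
  then have "inj_on (proj n T) V \<longleftrightarrow> inj_on (fun_of_vec n \<circ> proj n T) V"
    using comp_inj_on inj_on_imageI2 by blast
  also have "\<dots> \<longleftrightarrow> inj_on (restrict_fun {r. Suc r \<in> T} \<circ> fun_of_vec n) V"
    by (simp add: comp_def fun_of_vec_proj)
  also have "\<dots> \<longleftrightarrow> inj_on (restrict_fun {r. Suc r \<in> T}) (fun_of_vec n ` V)"
    using inj_on_subset[OF inj_on_fun_of_vec assms] by (rule comp_inj_on_iff[symmetric])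
  finally show ?thesis .
qed

lemma Gr_imp_pivots:
  assumes "V \<in> Gr k n"
  shows "pivots n V \<in> subsets_nk n k" "rfun.subspace (fun_of_vec n ` V)" "V \<subseteq> carrier_vec n"
proof -
  obtain A where A: "A \<in> carrier_mat n k" "inj_on ((*\<^sub>v) A) (carrier_vec k)" "V = col A"
    using assms by (auto simp: Gr_def)
  show "pivots n V \<in> subsets_nk n k" using pivots_col_in_subsets_nk[OF A(1,2)] A(3) by simp
  show "rfun.subspace (fun_of_vec n ` V)"
    unfolding A(3) fun_of_vec_col_eq_span[OF A(1)] by (rule rfun.subspace_span)
  show "V \<subseteq> carrier_vec n" using A by (auto simp: col_def)
qed

lemma Gr_in_U_pivots:
  assumes V: "V \<in> Gr k n"
  shows "V \<in> U k n (pivots n V)"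
proof -
  let ?W = "fun_of_vec n ` V" and ?T = "pivots n V"
  have W: "rfun.subspace ?W" "?W \<subseteq> funs_below n" "V \<subseteq> carrier_vec n"
    using Gr_imp_pivots[OF V] fun_of_vec_in_funs_below by auto
  have T: "{r. Suc r \<in> ?T} = pivot_set ?W" by (auto simp: pivots_def)
  have inj: "inj_on (proj n ?T) V"
    unfolding inj_on_proj_iff[OF W(3)] T using inj_on_restrict_pivot_set[OF W(1,2)] .
  have "coord_space n ?T \<subseteq> proj n ?T ` V"
  proof
    fix u assume u: "u \<in> coord_space n ?T"
    then have "\<forall>i. i \<notin> pivot_set ?W \<longrightarrow> fun_of_vec n u i = 0"
      by (auto simp: coord_space_def fun_of_vec_def pivots_def)
    then obtain v where v: "v \<in> V" "fun_of_vec n u = restrict_fun (pivot_set ?W) (fun_of_vec n v)"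
      using restrict_pivot_set_onto[OF W(1) fun_of_vec_in_funs_below] by blast
    then have "fun_of_vec n (proj n ?T v) = fun_of_vec n u" by (simp add: fun_of_vec_proj T)
    then have "proj n ?T v = u"
      using u by (intro inj_onD[OF inj_on_fun_of_vec]) (auto simp: proj_def coord_space_def)
    then show "u \<in> proj n ?T ` V" using v(1) by blast
  qed
  moreover have "proj n ?T ` V \<subseteq> coord_space n ?T" by (auto simp: proj_def coord_space_def)
  ultimately show ?thesis using V inj by (auto simp: U_def bij_betw_def)
qed

lemma U_imp_gale_le_pivots:
  assumes V: "V \<in> Gr k n" and T: "T \<in> subsets_nk n k" "V \<in> U k n T"
  shows "gale_le k T (pivots n V)"
proof (rule gale_le_if_card_le)
  let ?W = "fun_of_vec n ` V"
  have P: "pivots n V \<in> subsets_nk n k" "rfun.subspace ?W" "V \<subseteq> carrier_vec n"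
    using Gr_imp_pivots[OF V] by auto
  show "finite (pivots n V)" "card (pivots n V) = k" "finite T" "card T = k"
    using P(1) T(1) subsets_nk_finite[OF P(1)] subsets_nk_finite[OF T(1)] by (auto simp: subsets_nk_def)
  have "inj_on (proj n T) V" using T(2) by (simp add: U_def bij_betw_def)
  then have inj: "inj_on (restrict_fun {r. Suc r \<in> T}) ?W" by (simp add: inj_on_proj_iff[OF P(3)])
  have "0 \<notin> T" using T(1) by (auto simp: subsets_nk_def)
  then have T_eq: "T = Suc ` {r. Suc r \<in> T}" by (auto simp: image_iff) (metis not0_implies_Suc)
  fix m
  have "card {x\<in>pivots n V. x \<le> m} = card {r\<in>pivot_set ?W. r < m}"
    by (simp add: pivots_def card_Suc_image_le_eq)
  also have "\<dots> \<le> card {r\<in>{r. Suc r \<in> T}. r < m}" by (rule card_pivots_below_le[OF P(2) inj])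
  also have "\<dots> = card {x\<in>T. x \<le> m}" by (subst (2) T_eq) (simp add: card_Suc_image_le_eq)
  finally show "card {x\<in>pivots n V. x \<le> m} \<le> card {x\<in>T. x \<le> m}" .
qed

lemma Gr_in_schubert_cell_pivots:
  assumes "V \<in> Gr k n"
  shows "V \<in> schubert_cell k n (pivots n V)"
  unfolding schubert_cell_def using assms Gr_imp_pivots(1) Gr_in_U_pivots U_imp_gale_le_pivots by blast

section \<open>Rotations\<close>

lemma Rj_carrier[simp]: "Rj n j t \<in> carrier_mat n n"
  by (simp add: Rj_def)

lemma sum_two_entries:
  fixes v :: "real vec"
  assumes "p < n" "q < n" "p \<noteq> q"
  shows "(\<Sum>b\<in>{0..<n}. (if b = p then x else if b = q then y else 0) * v $ b) = x * v $ p + y * v $ q"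
proof -
  have "(\<Sum>b\<in>{0..<n}. (if b = p then x else if b = q then y else 0) * v $ b)
      = (\<Sum>b\<in>{0..<n}. (if b = p then x * v $ p else 0) + (if b = q then y * v $ q else 0))"
    using assms(3) by (intro sum.cong) auto
  also have "\<dots> = x * v $ p + y * v $ q" using assms by (simp add: sum.distrib)
  finally show ?thesis .
qed

lemma Rj_mult_vec_nth:
  assumes j: "1 \<le> j" "j < n" and v: "v \<in> carrier_vec n" and a: "a < n"
  shows "(Rj n j t *\<^sub>v v) $ a = (if Suc a = j then cos t * v $ a - sin t * v $ j
      else if a = j then sin t * v $ (j - 1) + cos t * v $ j else v $ a)"
proof -
  have "(Rj n j t *\<^sub>v v) $ a = (\<Sum>b\<in>{0..<n}. Rj n j t $$ (a, b) * v $ b)"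
    using a v by (simp add: Rj_def scalar_prod_def)
  also have "\<dots> = (if Suc a = j then cos t * v $ a - sin t * v $ j
      else if a = j then sin t * v $ (j - 1) + cos t * v $ j else v $ a)"
  proof -
    consider "Suc a = j" | "a = j" | "Suc a \<noteq> j" "a \<noteq> j" by blast
    then show ?thesis
    proof cases
      case 1
      then have "(\<Sum>b\<in>{0..<n}. Rj n j t $$ (a, b) * v $ b)
          = (\<Sum>b\<in>{0..<n}. (if b = a then cos t else if b = j then - sin t else 0) * v $ b)"
        using a by (intro sum.cong) (auto simp: Rj_def)
      then show ?thesis using 1 j by (simp add: sum_two_entries)
    next
      case 2
      then have "(\<Sum>b\<in>{0..<n}. Rj n j t $$ (a, b) * v $ b)
          = (\<Sum>b\<in>{0..<n}. (if b = j then cos t else if b = j - 1 then sin t else 0) * v $ b)"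
        using a j by (intro sum.cong) (auto simp: Rj_def)
      then show ?thesis using 2 j by (simp add: sum_two_entries add.commute)
    next
      case 3
      then have "(\<Sum>b\<in>{0..<n}. Rj n j t $$ (a, b) * v $ b) = (\<Sum>b\<in>{0..<n}. if b = a then v $ a else 0)"
        using a by (intro sum.cong) (auto simp: Rj_def)
      then show ?thesis using 3 a by simp
    qed
  qed
  finally show ?thesis .
qed

lemma Rj_mult_vec_carrier: "v \<in> carrier_vec n \<Longrightarrow> Rj n j t *\<^sub>v v \<in> carrier_vec n"
  using Rj_carrier mult_mat_vec_carrier by blast

lemma rotate_back:
  fixes x y t :: real
  shows "cos t * (cos t * x - sin t * y) + sin t * (sin t * x + cos t * y) = x"
    and "cos t * (sin t * x + cos t * y) - sin t * (cos t * x - sin t * y) = y"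
proof -
  have "cos t * (cos t * x - sin t * y) + sin t * (sin t * x + cos t * y) = x * (cos t * cos t + sin t * sin t)"
    by (simp add: algebra_simps del: sin_cos_squared_add3)
  then show "cos t * (cos t * x - sin t * y) + sin t * (sin t * x + cos t * y) = x"
    by (simp add: sin_cos_squared_add3)
  have "cos t * (sin t * x + cos t * y) - sin t * (cos t * x - sin t * y) = y * (cos t * cos t + sin t * sin t)"
    by (simp add: algebra_simps del: sin_cos_squared_add3)
  then show "cos t * (sin t * x + cos t * y) - sin t * (cos t * x - sin t * y) = y"
    by (simp add: sin_cos_squared_add3)
qed

lemma Rj_inverse:
  assumes j: "1 \<le> j" "j < n" and v: "v \<in> carrier_vec n"
  shows "Rj n j (- t) *\<^sub>v (Rj n j t *\<^sub>v v) = v"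
proof (rule eq_vecI)
  show "dim_vec (Rj n j (- t) *\<^sub>v (Rj n j t *\<^sub>v v)) = dim_vec v" using v by (simp add: Rj_def)
  fix a assume "a < dim_vec v"
  then have a: "a < n" using v by simp
  have "j - 1 < n" using j by simp
  then show "(Rj n j (- t) *\<^sub>v (Rj n j t *\<^sub>v v)) $ a = v $ a"
    using j a Rj_mult_vec_nth[OF j Rj_mult_vec_carrier[OF v]] Rj_mult_vec_nth[OF j v]
    by (auto simp: rotate_back)
qed

lemma Rj_vecs_below:
  assumes j: "1 \<le> j" "j < n" "j \<noteq> m" and v: "v \<in> vecs_below n m"
  shows "Rj n j t *\<^sub>v v \<in> vecs_below n m"
  using assms Rj_mult_vec_nth[OF j(1,2)] Rj_mult_vec_carrier by (auto simp: vecs_below_def)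

lemma Rj_vecs_below_Suc:
  assumes j: "1 \<le> j" "j < n" and v: "v \<in> vecs_below n j"
  shows "Rj n j t *\<^sub>v v \<in> vecs_below n (Suc j)"
  using assms Rj_mult_vec_nth[OF j(1,2)] Rj_mult_vec_carrier by (auto simp: vecs_below_def)

lemma Rj_vecs_below_sin_zero:
  assumes j: "1 \<le> j" "j < n" and "sin t = 0" and v: "v \<in> vecs_below n j"
  shows "Rj n j t *\<^sub>v v \<in> vecs_below n j"
  using assms Rj_mult_vec_nth[OF j(1,2)] Rj_mult_vec_carrier by (auto simp: vecs_below_def)

definition rotate_vec :: "nat \<Rightarrow> (nat \<times> nat \<Rightarrow> real) \<Rightarrow> (nat \<times> nat) list \<Rightarrow> real vec \<Rightarrow> real vec" where
  "rotate_vec n \<theta> zs v = foldr (\<lambda>(i, j) v. Rj n j (\<theta> (i, j)) *\<^sub>v v) zs v"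

definition rotations :: "nat \<Rightarrow> (nat \<times> nat \<Rightarrow> real) \<Rightarrow> (nat \<times> nat) list \<Rightarrow> real mat" where
  "rotations n \<theta> zs = foldr (\<lambda>(i, j) M. Rj n j (\<theta> (i, j)) * M) zs (1\<^sub>m n)"

lemma rotate_vec_Nil[simp]: "rotate_vec n \<theta> [] v = v"
  by (simp add: rotate_vec_def)

lemma rotate_vec_Cons[simp]: "rotate_vec n \<theta> ((i, j) # zs) v = Rj n j (\<theta> (i, j)) *\<^sub>v rotate_vec n \<theta> zs v"
  by (simp add: rotate_vec_def)

lemma rotate_vec_append: "rotate_vec n \<theta> (xs @ ys) v = rotate_vec n \<theta> xs (rotate_vec n \<theta> ys v)"
  by (simp add: rotate_vec_def)

lemma rotations_carrier: "rotations n \<theta> zs \<in> carrier_mat n n"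
  by (induction zs) (auto simp: rotations_def intro: mult_carrier_mat[OF Rj_carrier])

lemma rotations_mult_vec: "v \<in> carrier_vec n \<Longrightarrow> rotations n \<theta> zs *\<^sub>v v = rotate_vec n \<theta> zs v"
proof (induction zs)
  case Nil then show ?case by (simp add: rotations_def)
next
  case (Cons z zs)
  obtain i j where z: "z = (i, j)" by force
  have "rotations n \<theta> (z # zs) *\<^sub>v v = Rj n j (\<theta> (i, j)) *\<^sub>v (rotations n \<theta> zs *\<^sub>v v)"
    using assoc_mult_mat_vec[OF Rj_carrier rotations_carrier Cons.prems] by (simp add: rotations_def z)
  then show ?case using Cons by (simp add: z)
qed

lemma rotate_vec_carrier: "v \<in> carrier_vec n \<Longrightarrow> rotate_vec n \<theta> zs v \<in> carrier_vec n"
  by (metis rotations_mult_vec rotations_carrier mult_mat_vec_carrier)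

lemma inj_on_rotate_vec:
  assumes "\<forall>(i, j)\<in>set zs. 1 \<le> j \<and> j < n"
  shows "inj_on (rotate_vec n \<theta> zs) (carrier_vec n)"
  using assms
proof (induction zs)
  case (Cons z zs)
  obtain i j where z: "z = (i, j)" and j: "1 \<le> j" "j < n" using Cons.prems by (cases z) auto
  show ?case
  proof (rule inj_onI)
    fix v w assume vw: "v \<in> carrier_vec n" "w \<in> carrier_vec n" "rotate_vec n \<theta> (z # zs) v = rotate_vec n \<theta> (z # zs) w"
    then have "Rj n j (- \<theta> (i, j)) *\<^sub>v (Rj n j (\<theta> (i, j)) *\<^sub>v rotate_vec n \<theta> zs v)
             = Rj n j (- \<theta> (i, j)) *\<^sub>v (Rj n j (\<theta> (i, j)) *\<^sub>v rotate_vec n \<theta> zs w)"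
      by (simp add: z)
    then have "rotate_vec n \<theta> zs v = rotate_vec n \<theta> zs w"
      using vw(1,2) by (simp add: Rj_inverse[OF j] rotate_vec_carrier)
    then show "v = w" using Cons vw inj_onD by fastforce
  qed
qed (simp add: inj_on_def)

lemma rotate_vec_vecs_below:
  assumes "\<forall>(i, j)\<in>set zs. 1 \<le> j \<and> j < n \<and> j \<noteq> m" and "v \<in> vecs_below n m"
  shows "rotate_vec n \<theta> zs v \<in> vecs_below n m"
  using assms by (induction zs) (auto intro!: Rj_vecs_below)

definition Z_row :: "nat \<Rightarrow> nat \<Rightarrow> (nat \<times> nat) list" where
  "Z_row i p = map (\<lambda>j. (i, j)) (rev [i..<p])"

lemma Z_row_Suc: "i \<le> p \<Longrightarrow> Z_row i (Suc p) = (i, p) # Z_row i p"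
  by (simp add: Z_row_def)

lemma rotate_vec_Z_row_vecs_below:
  assumes "1 \<le> i" "p \<le> n" "v \<in> vecs_below n i"
  shows "i \<le> p \<Longrightarrow> rotate_vec n \<theta> (Z_row i p) v \<in> vecs_below n p"
  using assms(2)
proof (induction p)
  case (Suc p)
  show ?case
  proof (cases "i = Suc p")
    case False
    then have "i \<le> p" using Suc by simp
    then show ?thesis using Suc assms by (simp add: Z_row_Suc Rj_vecs_below_Suc)
  qed (use assms in \<open>simp add: Z_row_def\<close>)
qed (use assms in \<open>simp add: Z_row_def\<close>)

lemma rotate_vec_Z_row_vecs_below_sin_zero:
  assumes "1 \<le> i" "p \<le> n" "v \<in> vecs_below n i" "i \<le> j\<^sub>0" "sin (\<theta> (i, j\<^sub>0)) = 0"
  shows "j\<^sub>0 < p \<Longrightarrow> rotate_vec n \<theta> (Z_row i p) v \<in> vecs_below n (p - 1)"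
  using assms(2)
proof (induction p)
  case (Suc p)
  have ip: "i \<le> p" using Suc.prems assms by simp
  show ?case
  proof (cases "j\<^sub>0 = p")
    case True
    have "rotate_vec n \<theta> (Z_row i p) v \<in> vecs_below n p"
      using rotate_vec_Z_row_vecs_below[OF assms(1) _ assms(3) ip] Suc.prems by simp
    then show ?thesis using True ip assms Suc.prems by (simp add: Z_row_Suc Rj_vecs_below_sin_zero)
  next
    case False
    then have "rotate_vec n \<theta> (Z_row i p) v \<in> vecs_below n (p - 1)" using Suc by simp
    then have "Rj n p (\<theta> (i, p)) *\<^sub>v rotate_vec n \<theta> (Z_row i p) v \<in> vecs_below n (p - 1)"
      using ip assms Suc.prems False by (intro Rj_vecs_below) auto
    then show ?thesis using ip by (auto simp: Z_row_Suc vecs_below_def)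
  qed
qed simp

section \<open>The columns of Rot\<close>

lemma Z_list_eq_rows: "Z_list k S = concat (map (\<lambda>i. Z_row i (elt S i)) [1..<Suc k])"
  by (simp add: Z_list_def Z_row_def)

lemma mem_Z_rows:
  "(a, b) \<in> set (concat (map (\<lambda>i. Z_row i (elt S i)) xs)) \<longleftrightarrow> a \<in> set xs \<and> a \<le> b \<and> b < elt S a"
  by (auto simp: Z_row_def intro!: bexI[of _ a] image_eqI[of _ _ b])

lemma Z_list_split:
  assumes "1 \<le> c" "c \<le> k"
  shows "Z_list k S = concat (map (\<lambda>i. Z_row i (elt S i)) [1..<c]) @ Z_row c (elt S c)
      @ concat (map (\<lambda>i. Z_row i (elt S i)) [Suc c..<Suc k])"
proof -
  have "[1..<Suc k] = [1..<c] @ c # [Suc c..<Suc k]"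
    using assms upt_add_eq_append[of 1 c "Suc k - c"] by (simp add: upt_conv_Cons)
  then show ?thesis unfolding Z_list_eq_rows by simp
qed

lemma Z_list_range:
  assumes "S \<in> subsets_nk n k" "(i, j) \<in> set (Z_list k S)"
  shows "1 \<le> j" "j < n"
  using assms(2) subsets_nk_elt[OF assms(1), of i] unfolding Z_list_eq_rows mem_Z_rows by auto

lemma rotate_vec_Z_list_unit_vec:
  assumes S: "S \<in> subsets_nk n k" and c: "1 \<le> c" "c \<le> k" and kn: "k \<le> n"
  shows "rotate_vec n \<theta> (Z_list k S) (unit_vec n (c - 1)) \<in> vecs_below n (elt S c)"
    and "c \<le> j\<^sub>0 \<Longrightarrow> j\<^sub>0 < elt S c \<Longrightarrow> sin (\<theta> (c, j\<^sub>0)) = 0 \<Longrightarrow>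
         rotate_vec n \<theta> (Z_list k S) (unit_vec n (c - 1)) \<in> vecs_below n (elt S c - 1)"
proof -
  let ?H = "concat (map (\<lambda>i. Z_row i (elt S i)) [1..<c])"
  let ?T = "concat (map (\<lambda>i. Z_row i (elt S i)) [Suc c..<Suc k])"
  let ?v = "rotate_vec n \<theta> ?T (unit_vec n (c - 1))"
  have split: "rotate_vec n \<theta> (Z_list k S) (unit_vec n (c - 1)) = rotate_vec n \<theta> ?H (rotate_vec n \<theta> (Z_row c (elt S c)) ?v)"
    unfolding Z_list_split[OF c] rotate_vec_append by simp
  have elt_c: "c \<le> elt S c" "elt S c \<le> n" using subsets_nk_elt[OF S c] by auto
  have finS: "finite S" using subsets_nk_finite[OF S] .
  have "unit_vec n (c - 1) \<in> vecs_below n c" using c kn by (auto simp: vecs_below_def)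
  moreover have "\<forall>(a, b)\<in>set ?T. 1 \<le> b \<and> b < n \<and> b \<noteq> c"
  proof (intro ballI, clarify)
    fix a b assume "(a, b) \<in> set ?T"
    then have "Suc c \<le> a" "a \<le> k" "a \<le> b" "b < elt S a" unfolding mem_Z_rows by auto
    then show "1 \<le> b \<and> b < n \<and> b \<noteq> c" using subsets_nk_elt(2)[OF S, of a] c by simp
  qed
  ultimately have v: "?v \<in> vecs_below n c" by (rule rotate_vec_vecs_below[rotated])
  have H: "\<forall>(a, b)\<in>set ?H. 1 \<le> b \<and> b < n \<and> b \<noteq> m" if "elt S c - 1 \<le> m" for m
  proof (intro ballI, clarify)
    fix a b assume "(a, b) \<in> set ?H"
    then have a: "1 \<le> a" "a < c" "a \<le> b" "b < elt S a" unfolding mem_Z_rows by auto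
    have "elt S a < elt S c"
      using elt_strict_mono[OF finS a(1,2)] S c by (simp add: subsets_nk_def)
    then show "1 \<le> b \<and> b < n \<and> b \<noteq> m" using a elt_c that by linarith
  qed
  show "rotate_vec n \<theta> (Z_list k S) (unit_vec n (c - 1)) \<in> vecs_below n (elt S c)"
    unfolding split
    by (rule rotate_vec_vecs_below[OF H rotate_vec_Z_row_vecs_below[OF c(1) elt_c(2) v elt_c(1)]]) simp
  assume j\<^sub>0: "c \<le> j\<^sub>0" "j\<^sub>0 < elt S c" "sin (\<theta> (c, j\<^sub>0)) = 0"
  show "rotate_vec n \<theta> (Z_list k S) (unit_vec n (c - 1)) \<in> vecs_below n (elt S c - 1)"
    unfolding split
    by (rule rotate_vec_vecs_below[OF H rotate_vec_Z_row_vecs_below_sin_zero[where \<theta> = \<theta>, OF c(1) elt_c(2) v j\<^sub>0(1,3,2)]]) simp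
qed

definition Rot_matrix :: "nat \<Rightarrow> nat \<Rightarrow> nat set \<Rightarrow> (nat \<times> nat \<Rightarrow> real) \<Rightarrow> real mat" where
  "Rot_matrix n k S \<theta> = rotations n \<theta> (Z_list k S) * id_nk n k"

lemma Rot_eq_col_Rot_matrix: "Rot n k S \<theta> = col (Rot_matrix n k S \<theta>)"
  by (simp add: Rot_def Rot_matrix_def rotations_def)

lemma Rot_matrix_carrier: "Rot_matrix n k S \<theta> \<in> carrier_mat n k"
  unfolding Rot_matrix_def by (rule mult_carrier_mat[OF rotations_carrier]) (simp add: id_nk_def)

lemma col_Rot_matrix:
  assumes "c < k" "k \<le> n"
  shows "Matrix.col (Rot_matrix n k S \<theta>) c = rotate_vec n \<theta> (Z_list k S) (unit_vec n c)"
proof -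
  have "Matrix.col (id_nk n k) c = unit_vec n c" using assms by (auto simp: id_nk_def)
  moreover have "id_nk n k \<in> carrier_mat n k" by (simp add: id_nk_def)
  ultimately show ?thesis
    using assms col_mult2[OF rotations_carrier] by (simp add: Rot_matrix_def rotations_mult_vec)
qed

lemma inj_on_Rot_matrix:
  assumes S: "S \<in> subsets_nk n k" and kn: "k \<le> n"
  shows "inj_on ((*\<^sub>v) (Rot_matrix n k S \<theta>)) (carrier_vec k)"
proof (rule inj_onI)
  fix x y assume xy: "x \<in> carrier_vec k" "y \<in> carrier_vec k"
    "Rot_matrix n k S \<theta> *\<^sub>v x = Rot_matrix n k S \<theta> *\<^sub>v y"
  have I: "id_nk n k \<in> carrier_mat n k" by (simp add: id_nk_def)
  have "Rot_matrix n k S \<theta> *\<^sub>v z = rotate_vec n \<theta> (Z_list k S) (id_nk n k *\<^sub>v z)" if "z \<in> carrier_vec k" for z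
    using assoc_mult_mat_vec[OF rotations_carrier I that] rotations_mult_vec[OF mult_mat_vec_carrier[OF I that]]
    by (simp add: Rot_matrix_def)
  then have "rotate_vec n \<theta> (Z_list k S) (id_nk n k *\<^sub>v x) = rotate_vec n \<theta> (Z_list k S) (id_nk n k *\<^sub>v y)"
    using xy by simp
  moreover have "\<forall>(i, j)\<in>set (Z_list k S). 1 \<le> j \<and> j < n" using Z_list_range[OF S] by blast
  ultimately have "id_nk n k *\<^sub>v x = id_nk n k *\<^sub>v y"
    using inj_on_rotate_vec xy(1,2) mult_mat_vec_carrier[OF I] by (meson inj_onD)
  moreover have "(id_nk n k *\<^sub>v z) $ a = z $ a" if "z \<in> carrier_vec k" "a < k" for z a
  proof -
    have "row (id_nk n k) a = unit_vec k a" using that kn by (auto simp: id_nk_def)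
    then show ?thesis using that kn I by simp
  qed
  ultimately show "x = y"
    using xy(1,2) by (intro eq_vecI) (metis carrier_vecD, simp)
qed

lemma col_Rot_matrix_below:
  assumes S: "S \<in> subsets_nk n k" and kn: "k \<le> n" and i: "1 \<le> i" "i \<le> k" and "c < i"
  shows "Matrix.col (Rot_matrix n k S \<theta>) c \<in> vecs_below n (elt S i)"
proof -
  have "Matrix.col (Rot_matrix n k S \<theta>) c \<in> vecs_below n (elt S (Suc c))"
    using rotate_vec_Z_list_unit_vec(1)[OF S _ _ kn, of "Suc c"] col_Rot_matrix assms by simp
  moreover have "elt S (Suc c) \<le> elt S i"
    using elt_mono[OF subsets_nk_finite[OF S], of "Suc c" i] S assms by (simp add: subsets_nk_def)
  ultimately show ?thesis using vecs_below_mono by blast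
qed

lemma col_Rot_matrix_below_boundary:
  assumes S: "S \<in> subsets_nk n k" and kn: "k \<le> n" and ij: "(i, j) \<in> Z k S" "sin (\<theta> (i, j)) = 0"
    and "c < i"
  shows "Matrix.col (Rot_matrix n k S \<theta>) c \<in> vecs_below n (elt S i - 1)"
proof (cases "Suc c = i")
  case True
  have i: "1 \<le> i" "i \<le> k" "i \<le> j" "j < elt S i" using ij(1) by (auto simp: Z_def)
  then have "rotate_vec n \<theta> (Z_list k S) (unit_vec n (i - 1)) \<in> vecs_below n (elt S i - 1)"
    using rotate_vec_Z_list_unit_vec(2)[OF S _ _ kn] ij(2) by blast
  then show ?thesis using col_Rot_matrix[of c k n] True kn i by auto
next
  case False
  have i: "1 \<le> i" "i \<le> k" using ij(1) by (auto simp: Z_def)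
  then have "elt S (Suc c) < elt S i"
    using False elt_strict_mono[OF subsets_nk_finite[OF S], of "Suc c" i] S \<open>c < i\<close>
    by (simp add: subsets_nk_def)
  then have "elt S (Suc c) \<le> elt S i - 1" by simp
  moreover have "Matrix.col (Rot_matrix n k S \<theta>) c \<in> vecs_below n (elt S (Suc c))"
    using col_Rot_matrix_below[OF S kn, of "Suc c" c] i \<open>c < i\<close> by simp
  ultimately show ?thesis using vecs_below_mono by blast
qed

theorem lemma2p11:
  fixes n k :: nat and S :: "nat set" and \<theta> :: "nat \<times> nat \<Rightarrow> real"
  assumes "1 \<le> k" and "k \<le> n"
    and "S \<in> subsets_nk n k"
    and "\<forall>z \<in> Z k S. \<theta> z \<in> {0..pi}"
    and "\<exists>z \<in> Z k S. \<theta> z \<notin> {0<..<pi}"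
  shows "Rot n k S \<theta> \<in> (\<Union>T \<in> {T \<in> subsets_nk n k. gale_less k T S}. schubert_cell k n T)"
proof -
  define A where "A = Rot_matrix n k S \<theta>"
  define T where "T = pivots n (col A)"
  have A: "A \<in> carrier_mat n k" "inj_on ((*\<^sub>v) A) (carrier_vec k)"
    unfolding A_def using Rot_matrix_carrier inj_on_Rot_matrix[OF assms(3,2)] by simp_all
  have V: "Rot n k S \<theta> = col A" by (simp add: A_def Rot_eq_col_Rot_matrix)
  have "col A \<in> Gr k n" using A by (auto simp: Gr_def)
  then have T: "T \<in> subsets_nk n k" "col A \<in> schubert_cell k n T"
    unfolding T_def by (rule Gr_imp_pivots(1), rule Gr_in_schubert_cell_pivots)
  have "elt T i \<le> elt S i" if "i \<in> {1..k}" for i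
    unfolding T_def using that col_Rot_matrix_below[OF assms(3,2)]
    by (intro elt_pivots_col_le[OF A]) (auto simp: A_def)
  then have "gale_le k T S" by (simp add: gale_le_def)
  moreover obtain i j where ij: "(i, j) \<in> Z k S" "sin (\<theta> (i, j)) = 0"
  proof -
    obtain z where "z \<in> Z k S" "\<theta> z = 0 \<or> \<theta> z = pi" using assms(4,5) by force
    then show ?thesis using that by (cases z) auto
  qed
  have "elt T i \<le> elt S i - 1"
    unfolding T_def using ij col_Rot_matrix_below_boundary[where \<theta> = \<theta>, OF assms(3,2) ij]
    by (intro elt_pivots_col_le[OF A]) (auto simp: A_def Z_def)
  then have "T \<noteq> S" using ij(1) by (auto simp: Z_def)
  ultimately show ?thesis using T V by (auto simp: gale_less_def)
qed

end
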